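(* Let $\psi:\Omega_n\to\mathbb{R}$ be any function, and define $|\!|\!|x|\!|\!|_\psi:=\big(\sum_{i=1}^n\|x_i\|\big)\,\psi\big(\frac{\|x_1\|}{\sum_{i}\|x_i\|},\ldots,\frac{\|x_n\|}{\sum_{i}\|x_i\|}\big)$ for $x=(x_1,\ldots,x_n)\in X^n\setminus\{0_{X^n}\}$ and $|\!|\!|0_{X^n}|\!|\!|_\psi:=0$. (i) If $|\!|\!|\cdot|\!|\!|_\psi\in\mathbf{N}_{X^n}$, then $\psi\in\mathbf{\Psi}_n$. (ii) If $|\!|\!|\cdot|\!|\!|_\psi\in\mathbf{N}^{\rm sc}_{X^n}$, then $\psi\in\mathbf{\Psi}^{\rm sc}_n$ and the norm $\|\cdot\|$ is strictly convex.
   Context: Let $(X,\|\cdot\|)$ be a normed vector space, $n\ge2$. $\mathbf{N}_{X^n}$ is the family of norms $|\!|\!|\cdot|\!|\!|$ on $X^n$ satisfying (A1) $|\!|\!|(x_1,\ldots,x_n)|\!|\!|=|\!|\!|(\pm x_1,\ldots,\pm x_n)|\!|\!|$ for all $x\in X^n$ and all sign choices, and (A2) $|\!|\!|(0_X,\ldots,0_X,v,0_X,\ldots,0_X)|\!|\!|=\|v\|$ for all $v\in X$ in any $i$th position. $\mathbf{N}^{\rm sc}_{X^n}$ is its subclass of strictly convex norms. $\Omega_n:=\{t\in\mathbb{R}^n\mid t_i\ge0,\ \sum_i t_i=1\}$, $\Omega_n^\circ:=\{t\in\Omega_n\mid t_i<1\ \forall i\}$. $\mathbf{\Psi}_n$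 is the class of convex continuous $\psi:\Omega_n\to\mathbb{R}$ with (B1) $\psi(\mathbf{e}_i)=1$ for all standard unit vectors $\mathbf{e}_i$ and (B2) $\psi(t)\ge(1-t_i)\psi\big(\frac{t_1}{1-t_i},\ldots,\frac{t_{i-1}}{1-t_i},0,\frac{t_{i+1}}{1-t_i},\ldots,\frac{t_n}{1-t_i}\big)$ for all $t\in\Omega_n^\circ$, $i=1,\ldots,n$; $\mathbf{\Psi}^{\rm sc}_n$ is its subclass of strictly convex functions. *)

theory Defs
  imports "HOL-Analysis.Analysis"
begin

text \<open>X^n is modelled as the type 'a ^ 'n (index type 'n finite, n = CARD('n)).
  A candidate norm on X^n is a function N :: 'a^'n => real; we do not use the
  library's norm instance on 'a^'n since the norm here is arbitrary.\<close>

definition is_norm :: "('v::real_vector \<Rightarrow> real) \<Rightarrow> bool" where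
  "is_norm N \<longleftrightarrow>
     (\<forall>x. N x = 0 \<longleftrightarrow> x = 0) \<and>
     (\<forall>c x. N (c *\<^sub>R x) = \<bar>c\<bar> * N x) \<and>
     (\<forall>x y. N (x + y) \<le> N x + N y)"

definition strictly_convex_norm :: "('v::real_vector \<Rightarrow> real) \<Rightarrow> bool" where
  "strictly_convex_norm N \<longleftrightarrow>
     (\<forall>x y. N x = 1 \<and> N y = 1 \<and> x \<noteq> y \<longrightarrow> N ((1/2) *\<^sub>R (x + y)) < 1)"

definition absolute_normalized_norm :: "('a::real_normed_vector ^ 'n \<Rightarrow> real) \<Rightarrow> bool" where
  "absolute_normalized_norm N \<longleftrightarrow>
     is_norm N \<and>
     (\<forall>x (s::'n \<Rightarrow> real). (\<forall>i. s i = 1 \<or> s i = -1) \<longrightarrow>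
        N (\<chi> i. s i *\<^sub>R (x $ i)) = N x) \<and>
     (\<forall>i (v::'a). N (\<chi> j. if j = i then v else 0) = norm v)"

definition absolute_normalized_sc_norm :: "('a::real_normed_vector ^ 'n \<Rightarrow> real) \<Rightarrow> bool" where
  "absolute_normalized_sc_norm N \<longleftrightarrow> absolute_normalized_norm N \<and> strictly_convex_norm N"

definition Omega :: "(real ^ 'n) set" where
  "Omega = {t. (\<forall>i. 0 \<le> t $ i) \<and> (\<Sum>i\<in>UNIV. t $ i) = 1}"

definition Omega_int :: "(real ^ 'n) set" where
  "Omega_int = {t \<in> Omega. \<forall>i. t $ i < 1}"

definition unit_vec :: "'n \<Rightarrow> real ^ 'n" where
  "unit_vec i = (\<chi> j. if j = i then 1 else 0)"

definition strictly_convex_on :: "'v::real_vector set \<Rightarrow> ('v \<Rightarrow> real) \<Rightarrow> bool" where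
  "strictly_convex_on S f \<longleftrightarrow> convex S \<and>
     (\<forall>x\<in>S. \<forall>y\<in>S. \<forall>u. x \<noteq> y \<and> 0 < u \<and> u < 1 \<longrightarrow>
        f ((1 - u) *\<^sub>R x + u *\<^sub>R y) < (1 - u) * f x + u * f y)"

definition Psi :: "(real ^ 'n \<Rightarrow> real) \<Rightarrow> bool" where
  "Psi \<psi> \<longleftrightarrow>
     convex_on Omega \<psi> \<and> continuous_on Omega \<psi> \<and>
     (\<forall>i. \<psi> (unit_vec i) = 1) \<and>
     (\<forall>t\<in>Omega_int. \<forall>i.
        \<psi> t \<ge> (1 - t $ i) * \<psi> (\<chi> j. if j = i then 0 else t $ j / (1 - t $ i)))"

definition Psi_sc :: "(real ^ 'n \<Rightarrow> real) \<Rightarrow> bool" where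
  "Psi_sc \<psi> \<longleftrightarrow> Psi \<psi> \<and> strictly_convex_on Omega \<psi>"

definition psi_norm :: "(real ^ 'n \<Rightarrow> real) \<Rightarrow> 'a::real_normed_vector ^ 'n \<Rightarrow> real" where
  "psi_norm \<psi> x =
     (if x = 0 then 0
      else (\<Sum>i\<in>UNIV. norm (x $ i)) *
           \<psi> (\<chi> i. norm (x $ i) / (\<Sum>j\<in>UNIV. norm (x $ j))))"

end

theory Submission
  imports Defs
begin

text \<open>For a unit vector \<open>u \<in> X\<close>, the linear injection \<open>t \<mapsto> (t\<^sub>1 u, \<dots>, t\<^sub>n u)\<close> carries
  each \<open>t \<in> \<Omega>\<^sub>n\<close> to a point of \<open>\<psi>\<close>-norm \<open>\<psi> t\<close>. Hence \<open>\<psi>\<close> is the restriction to \<open>\<Omega>\<^sub>n\<close> of a norm: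
  it is convex, and continuous because \<open>|||x|||\<^sub>\<psi> \<le> \<Sum>\<^sub>i \<parallel>x\<^sub>i\<parallel>\<close>. (B1) is (A2). For (B2), zeroing
  the \<open>i\<close>-th coordinate of \<open>x\<close> gives the midpoint of \<open>x\<close> and of \<open>x\<close> with the \<open>i\<close>-th sign flipped,
  which by (A1) has the same norm, so the norm does not increase. If the norm is strictly
  convex, its triangle inequality is strict for vectors that are not positive multiples of each
  other; distinct points of \<open>\<Omega>\<^sub>n\<close> are such vectors, and \<open>X\<close> sits isometrically in one
  coordinate of \<open>X\<^sup>n\<close>.\<close>

lemma is_norm_zero: "is_norm N \<Longrightarrow> N 0 = 0"
  unfolding is_norm_def by blast

lemma is_norm_scaleR: "is_norm N \<Longrightarrow> N (c *\<^sub>R x) = \<bar>c\<bar> * N x"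
  unfolding is_norm_def by blast

lemma is_norm_triangle: "is_norm N \<Longrightarrow> N (x + y) \<le> N x + N y"
  unfolding is_norm_def by blast

lemma is_norm_minus_commute: "is_norm N \<Longrightarrow> N (x - y) = N (y - x)"
  using is_norm_scaleR[of N "-1" "x - y"] by simp

lemma is_norm_nonneg:
  assumes "is_norm N"
  shows "N x \<ge> 0"
  using is_norm_triangle[OF assms, of x "- x"] is_norm_scaleR[OF assms, of "-1" x] is_norm_zero[OF assms]
  by simp

lemma is_norm_pos: "is_norm N \<Longrightarrow> x \<noteq> 0 \<Longrightarrow> N x > 0"
  using is_norm_nonneg[of N x] unfolding is_norm_def by force

lemma is_norm_triangle_diff:
  assumes "is_norm N"
  shows "\<bar>N x - N y\<bar> \<le> N (x - y)"
  using is_norm_triangle[OF assms, of "x - y" y] is_norm_triangle[OF assms, of "y - x" x]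
    is_norm_minus_commute[OF assms, of x y]
  by simp

lemma is_norm_sum:
  assumes "is_norm N" and "finite S"
  shows "N (\<Sum>j\<in>S. f j) \<le> (\<Sum>j\<in>S. N (f j))"
  using assms(2)
proof (induction S rule: finite_induct)
  case empty
  then show ?case using is_norm_zero[OF assms(1)] by simp
next
  case (insert x F)
  then show ?case using is_norm_triangle[OF assms(1), of "f x" "sum f F"] by simp
qed

lemma is_norm_convex_on_linear_image:
  assumes "is_norm N" and "linear L" and "convex S"
  shows "convex_on S (\<lambda>x. N (L x))"
proof (rule convex_onI)
  fix \<theta> :: real and x y
  assume "0 < \<theta>" "\<theta> < 1"
  have "N (L ((1 - \<theta>) *\<^sub>R x + \<theta> *\<^sub>R y)) = N ((1 - \<theta>) *\<^sub>R L x + \<theta> *\<^sub>R L y)"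
    using \<open>linear L\<close> by (simp add: linear_add linear_scale)
  also have "\<dots> \<le> (1 - \<theta>) * N (L x) + \<theta> * N (L y)"
    using is_norm_triangle[OF assms(1)] is_norm_scaleR[OF assms(1)] \<open>0 < \<theta>\<close> \<open>\<theta> < 1\<close>
    by (metis abs_of_pos diff_gt_0_iff_gt)
  finally show "N (L ((1 - \<theta>) *\<^sub>R x + \<theta> *\<^sub>R y)) \<le> (1 - \<theta>) * N (L x) + \<theta> * N (L y)" .
qed fact

lemma strictly_convex_norm_triangle_strict_le:
  assumes N: "is_norm N" and sc: "strictly_convex_norm N" and "p \<noteq> 0" "q \<noteq> 0"
    and le: "N p \<le> N q" and not_parallel: "\<And>c. c > 0 \<Longrightarrow> p \<noteq> c *\<^sub>R q"
  shows "N (p + q) < N p + N q"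
proof -
  define a b where "a = N p" and "b = N q"
  have "a > 0" "b > 0" using is_norm_pos[OF N] \<open>p \<noteq> 0\<close> \<open>q \<noteq> 0\<close> by (auto simp: a_def b_def)
  define p' q' where "p' = (1 / a) *\<^sub>R p" and "q' = (1 / b) *\<^sub>R q"
  have "N p' = 1" "N q' = 1"
    using is_norm_scaleR[OF N] \<open>a > 0\<close> \<open>b > 0\<close> by (simp_all add: p'_def q'_def a_def b_def)
  moreover have "p' \<noteq> q'"
  proof
    assume "p' = q'"
    have "p = a *\<^sub>R p'" using \<open>a > 0\<close> by (simp add: p'_def)
    also have "\<dots> = (a / b) *\<^sub>R q" by (simp add: \<open>p' = q'\<close> q'_def)
    finally show False using not_parallel \<open>a > 0\<close> \<open>b > 0\<close> by simp
  qed
  ultimately have "N ((1/2) *\<^sub>R (p' + q')) < 1"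
    using sc unfolding strictly_convex_norm_def by blast
  then have mid: "N (p' + q') < 2" using is_norm_scaleR[OF N, of "1/2" "p' + q'"] by simp
  have "a *\<^sub>R p' = p" "b *\<^sub>R q' = q" using \<open>a > 0\<close> \<open>b > 0\<close> by (simp_all add: p'_def q'_def)
  then have "p + q = a *\<^sub>R (p' + q') + (b - a) *\<^sub>R q'"
    by (simp add: algebra_simps)
  then have "N (p + q) \<le> a * N (p' + q') + (b - a) * N q'"
    using is_norm_triangle[OF N, of "a *\<^sub>R (p' + q')" "(b - a) *\<^sub>R q'"] is_norm_scaleR[OF N]
      \<open>a > 0\<close> le by (simp add: a_def b_def)
  also have "\<dots> < a + b" using mid \<open>a > 0\<close> \<open>N q' = 1\<close> by simp
  finally show ?thesis by (simp add: a_def b_def)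
qed

lemma strictly_convex_norm_triangle_strict:
  assumes "is_norm N" and "strictly_convex_norm N" and "p \<noteq> 0" "q \<noteq> 0"
    and not_parallel: "\<And>c. c > 0 \<Longrightarrow> p \<noteq> c *\<^sub>R q"
  shows "N (p + q) < N p + N q"
proof (cases "N p \<le> N q")
  case True
  with strictly_convex_norm_triangle_strict_le assms show ?thesis by blast
next
  case False
  have "q \<noteq> c *\<^sub>R p" if "c > 0" for c
    using not_parallel[of "1 / c"] that by auto
  with False strictly_convex_norm_triangle_strict_le[of N q p] assms show ?thesis
    by (simp add: add.commute)
qed

lemma absolute_normalized_norm_is_norm: "absolute_normalized_norm N \<Longrightarrow> is_norm N"
  unfolding absolute_normalized_norm_def by blast

lemma absolute_normalized_norm_axis: "absolute_normalized_norm N \<Longrightarrow> N (axis i v) = norm v"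
  unfolding absolute_normalized_norm_def axis_def by blast

lemma absolute_normalized_norm_le_sum_norm:
  fixes x :: "'a::real_normed_vector ^ 'n"
  assumes "absolute_normalized_norm N"
  shows "N x \<le> (\<Sum>j\<in>UNIV. norm (x $ j))"
proof -
  have "x = (\<Sum>j\<in>UNIV. axis j (x $ j))"
    by (simp add: vec_eq_iff axis_def)
  then have "N x = N (\<Sum>j\<in>UNIV. axis j (x $ j))" by simp
  also have "\<dots> \<le> (\<Sum>j\<in>UNIV. N (axis j (x $ j)))"
    by (rule is_norm_sum[OF absolute_normalized_norm_is_norm[OF assms] finite])
  finally show ?thesis by (simp add: absolute_normalized_norm_axis[OF assms])
qed

lemma absolute_normalized_norm_lipschitz:
  fixes N :: "'a::real_normed_vector ^ 'n \<Rightarrow> real"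
  assumes "absolute_normalized_norm N"
  shows "(real CARD('n))-lipschitz_on S N"
proof (rule lipschitz_onI)
  fix x y :: "'a ^ 'n"
  have "dist (N x) (N y) \<le> N (x - y)"
    unfolding dist_real_def by (rule is_norm_triangle_diff[OF absolute_normalized_norm_is_norm[OF assms]])
  also have "\<dots> \<le> (\<Sum>j\<in>UNIV. norm ((x - y) $ j))"
    by (rule absolute_normalized_norm_le_sum_norm[OF assms])
  also have "\<dots> \<le> (\<Sum>j\<in>(UNIV :: 'n set). dist x y)"
    unfolding dist_norm by (intro sum_mono Finite_Cartesian_Product.norm_nth_le)
  finally show "dist (N x) (N y) \<le> real CARD('n) * dist x y" by simp
qed simp

lemma absolute_normalized_norm_zero_coordinate:
  fixes x :: "'a::real_normed_vector ^ 'n"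
  assumes N: "absolute_normalized_norm N"
  shows "N (\<chi> j. if j = i then 0 else x $ j) \<le> N x"
proof -
  define flip where "flip = (\<chi> j. (if j = i then -1 else 1) *\<^sub>R x $ j)"
  have "N flip = N x"
    using N unfolding absolute_normalized_norm_def flip_def by simp
  moreover have "(\<chi> j. if j = i then 0 else x $ j) = (1/2) *\<^sub>R (x + flip)"
    by (simp add: vec_eq_iff flip_def)
  ultimately show ?thesis
    using is_norm_triangle[OF absolute_normalized_norm_is_norm[OF N], of x flip]
      is_norm_scaleR[OF absolute_normalized_norm_is_norm[OF N], of "1/2" "x + flip"]
    by simp
qed

definition along :: "'a::real_vector \<Rightarrow> real ^ 'n \<Rightarrow> 'a ^ 'n" where
  "along u t = (\<chi> j. t $ j *\<^sub>R u)"

lemma linear_along: "linear (along u)"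
  by (rule linearI) (simp_all add: along_def vec_eq_iff scaleR_add_left)

lemma along_eq_iff: "u \<noteq> 0 \<Longrightarrow> along u s = along u t \<longleftrightarrow> s = t"
  by (simp add: along_def vec_eq_iff)

lemma along_eq_0_iff: "u \<noteq> 0 \<Longrightarrow> along u t = 0 \<longleftrightarrow> t = 0"
  by (simp add: along_def vec_eq_iff)

lemma psi_norm_along:
  fixes u :: "'a::real_normed_vector"
  assumes "norm u = 1" and nonneg: "\<And>j. 0 \<le> t $ j" and "t \<noteq> 0"
  shows "psi_norm \<psi> (along u t) = (\<Sum>j\<in>UNIV. t $ j) * \<psi> (\<chi> j. t $ j / (\<Sum>k\<in>UNIV. t $ k))"
proof -
  have "u \<noteq> 0" using assms(1) by auto
  then have "along u t \<noteq> 0"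
    using along_eq_0_iff \<open>t \<noteq> 0\<close> by blast
  moreover have "norm (along u t $ j) = t $ j" for j
    using assms by (simp add: along_def)
  ultimately show ?thesis unfolding psi_norm_def by simp
qed

lemma Omega_nonneg: "t \<in> Omega \<Longrightarrow> 0 \<le> t $ j"
  and Omega_sum: "t \<in> Omega \<Longrightarrow> (\<Sum>j\<in>UNIV. t $ j) = 1"
  by (simp_all add: Omega_def)

lemma Omega_nonzero: "t \<in> Omega \<Longrightarrow> t \<noteq> 0"
  by (auto simp: Omega_def)

lemma convex_Omega: "convex Omega"
  unfolding convex_def Omega_def
  by (auto simp: sum.distrib sum_distrib_left[symmetric])

lemma Omega_parallel_eq:
  assumes "s \<in> Omega" "t \<in> Omega" and "s = c *\<^sub>R t"
  shows "s = t"
proof -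
  have "c = 1"
    using Omega_sum[OF assms(1)] Omega_sum[OF assms(2)] \<open>s = c *\<^sub>R t\<close>
    by (simp add: sum_distrib_left[symmetric])
  then show ?thesis using \<open>s = c *\<^sub>R t\<close> by simp
qed

lemma psi_norm_along_Omega:
  fixes u :: "'a::real_normed_vector"
  assumes "norm u = 1" and "t \<in> Omega"
  shows "psi_norm \<psi> (along u t) = \<psi> t"
  using psi_norm_along[OF assms(1) Omega_nonneg[OF assms(2)] Omega_nonzero[OF assms(2)]]
    Omega_sum[OF assms(2)]
  by simp

lemma psi_norm_along_zero_coordinate:
  fixes u :: "'a::real_normed_vector"
  assumes "norm u = 1" and "t \<in> Omega_int"
  shows "psi_norm \<psi> (along u (\<chi> j. if j = i then 0 else t $ j))
    = (1 - t $ i) * \<psi> (\<chi> j. if j = i then 0 else t $ j / (1 - t $ i))"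
proof -
  have t: "t \<in> Omega" and "t $ i < 1" using assms(2) by (auto simp: Omega_int_def)
  define r where "r = (\<chi> j. if j = i then 0 else t $ j)"
  have "(\<Sum>j\<in>UNIV. r $ j) = (\<Sum>j\<in>UNIV. t $ j - (if j = i then t $ i else 0))"
    by (rule sum.cong) (auto simp: r_def)
  then have sum_r: "(\<Sum>j\<in>UNIV. r $ j) = 1 - t $ i"
    using Omega_sum[OF t] by (simp add: sum_subtractf)
  then have "r \<noteq> 0" using \<open>t $ i < 1\<close> by auto
  then have "psi_norm \<psi> (along u r) = (1 - t $ i) * \<psi> (\<chi> j. r $ j / (1 - t $ i))"
    using psi_norm_along[OF assms(1), of r] Omega_nonneg[OF t] sum_r by (simp add: r_def)
  moreover have "(\<chi> j. r $ j / (1 - t $ i)) = (\<chi> j. if j = i then 0 else t $ j / (1 - t $ i))"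
    by (simp add: r_def vec_eq_iff)
  ultimately show ?thesis by (simp add: r_def)
qed

lemma Psi_if_absolute_normalized_psi_norm:
  fixes \<psi> :: "real ^ 'n \<Rightarrow> real" and u :: "'a::real_normed_vector"
  assumes u: "norm u = 1" and N: "absolute_normalized_norm (psi_norm \<psi> :: 'a ^ 'n \<Rightarrow> real)"
  shows "Psi \<psi>"
proof -
  let ?N = "psi_norm \<psi> :: 'a ^ 'n \<Rightarrow> real"
  note \<psi>_eq = psi_norm_along_Omega[OF u, where \<psi> = \<psi>, symmetric]
  have "convex_on Omega (\<lambda>t. ?N (along u t))"
    by (rule is_norm_convex_on_linear_image[OF absolute_normalized_norm_is_norm[OF N] linear_along convex_Omega])
  then have convex: "convex_on Omega \<psi>"
    by (intro convex_onI convex_Omega)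
      (simp add: \<psi>_eq convexD[OF convex_Omega] convex_onD[of Omega "\<lambda>t. ?N (along u t)"])
  have "continuous_on UNIV ?N"
    by (rule lipschitz_on_continuous_on[OF absolute_normalized_norm_lipschitz[OF N]])
  moreover have "continuous_on Omega (along u :: real ^ 'n \<Rightarrow> 'a ^ 'n)"
    by (simp add: linear_continuous_on linear_along flip: linear_conv_bounded_linear)
  ultimately have "continuous_on Omega (\<lambda>t. ?N (along u t))"
    by (rule continuous_on_compose2) simp
  then have continuous: "continuous_on Omega \<psi>"
    by (rule continuous_on_eq) (simp add: \<psi>_eq)
  have unit: "\<psi> (unit_vec i) = 1" for i
  proof -
    have "unit_vec i \<in> Omega" by (simp add: unit_vec_def Omega_def)
    moreover have "along u (unit_vec i) = axis i u"
      by (simp add: unit_vec_def along_def axis_def vec_eq_iff)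
    ultimately show ?thesis using \<psi>_eq absolute_normalized_norm_axis[OF N] u by simp
  qed
  have B2: "\<psi> t \<ge> (1 - t $ i) * \<psi> (\<chi> j. if j = i then 0 else t $ j / (1 - t $ i))"
    if t: "t \<in> Omega_int" for t i
  proof -
    have "along u (\<chi> j. if j = i then 0 else t $ j) = (\<chi> j. if j = i then 0 else along u t $ j)"
      by (simp add: along_def vec_eq_iff)
    then have "?N (along u (\<chi> j. if j = i then 0 else t $ j)) \<le> ?N (along u t)"
      using absolute_normalized_norm_zero_coordinate[OF N] by metis
    then show ?thesis
      using psi_norm_along_zero_coordinate[OF u t] \<psi>_eq t by (simp add: Omega_int_def)
  qed
  show ?thesis unfolding Psi_def using convex continuous unit B2 by blast
qed

lemma strictly_convex_on_Omega_if_sc_psi_norm: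
  fixes \<psi> :: "real ^ 'n \<Rightarrow> real" and u :: "'a::real_normed_vector"
  assumes u: "norm u = 1" and N: "absolute_normalized_sc_norm (psi_norm \<psi> :: 'a ^ 'n \<Rightarrow> real)"
  shows "strictly_convex_on Omega \<psi>"
  unfolding strictly_convex_on_def
proof (intro conjI ballI allI impI convex_Omega)
  let ?N = "psi_norm \<psi> :: 'a ^ 'n \<Rightarrow> real"
  note \<psi>_eq = psi_norm_along_Omega[OF u, where \<psi> = \<psi>, symmetric]
  have norm_N: "is_norm ?N" and sc: "strictly_convex_norm ?N"
    using N absolute_normalized_norm_is_norm unfolding absolute_normalized_sc_norm_def by auto
  have u0: "u \<noteq> 0" using u by auto
  fix x y :: "real ^ 'n" and \<theta> :: real
  assume x: "x \<in> Omega" and y: "y \<in> Omega" and "x \<noteq> y \<and> 0 < \<theta> \<and> \<theta> < 1"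
  then have "x \<noteq> y" "0 < \<theta>" "\<theta> < 1" by auto
  define p q where "p = along u ((1 - \<theta>) *\<^sub>R x)" and "q = along u (\<theta> *\<^sub>R y)"
  have "p \<noteq> 0" "q \<noteq> 0"
    using Omega_nonzero x y \<open>0 < \<theta>\<close> \<open>\<theta> < 1\<close>
    by (auto simp: p_def q_def along_eq_0_iff[OF u0])
  moreover have "p \<noteq> c *\<^sub>R q" if "c > 0" for c
  proof
    assume "p = c *\<^sub>R q"
    then have "along u ((1 - \<theta>) *\<^sub>R x) = along u ((c * \<theta>) *\<^sub>R y)"
      by (simp add: p_def q_def linear_scale[OF linear_along])
    then have "(1 - \<theta>) *\<^sub>R x = (c * \<theta>) *\<^sub>R y"
      by (simp only: along_eq_iff[OF u0])
    then have "(1 / (1 - \<theta>)) *\<^sub>R ((1 - \<theta>) *\<^sub>R x) = (1 / (1 - \<theta>)) *\<^sub>R ((c * \<theta>) *\<^sub>R y)"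
      by simp
    then have "x = (c * \<theta> / (1 - \<theta>)) *\<^sub>R y"
      using \<open>\<theta> < 1\<close> by simp
    then show False using Omega_parallel_eq[OF x y] \<open>x \<noteq> y\<close> by blast
  qed
  ultimately have "?N (p + q) < ?N p + ?N q"
    by (rule strictly_convex_norm_triangle_strict[OF norm_N sc])
  moreover have "p + q = along u ((1 - \<theta>) *\<^sub>R x + \<theta> *\<^sub>R y)"
    by (simp add: p_def q_def linear_add[OF linear_along])
  moreover have "?N p = (1 - \<theta>) * \<psi> x" "?N q = \<theta> * \<psi> y"
    using is_norm_scaleR[OF norm_N] \<psi>_eq x y \<open>0 < \<theta>\<close> \<open>\<theta> < 1\<close>
    by (simp_all add: p_def q_def linear_scale[OF linear_along])
  ultimately show "\<psi> ((1 - \<theta>) *\<^sub>R x + \<theta> *\<^sub>R y) < (1 - \<theta>) * \<psi> x + \<theta> * \<psi> y"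
    using \<psi>_eq convexD[OF convex_Omega x y, of "1 - \<theta>" \<theta>] \<open>0 < \<theta>\<close> \<open>\<theta> < 1\<close> by simp
qed

lemma strictly_convex_norm_if_absolute_normalized_sc:
  fixes N :: "'a::real_normed_vector ^ 'n \<Rightarrow> real"
  assumes N: "absolute_normalized_sc_norm N"
  shows "strictly_convex_norm (norm :: 'a \<Rightarrow> real)"
  unfolding strictly_convex_norm_def
proof (intro allI impI)
  have axis: "N (axis i v) = norm v" for i v
    using N absolute_normalized_norm_axis unfolding absolute_normalized_sc_norm_def by blast
  fix x y :: 'a and i :: 'n
  assume "norm x = 1 \<and> norm y = 1 \<and> x \<noteq> y"
  then have "N ((1/2) *\<^sub>R (axis i x + axis i y)) < 1"
    using N axis axis_eq_axis
    unfolding absolute_normalized_sc_norm_def strictly_convex_norm_def by metis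
  moreover have "(1/2) *\<^sub>R (axis i x + axis i y) = axis i ((1/2) *\<^sub>R (x + y))"
    by (simp add: axis_def vec_eq_iff)
  ultimately show "norm ((1/2) *\<^sub>R (x + y)) < 1" using axis by metis
qed

theorem theorem2p12:
  fixes \<psi> :: "real ^ 'n \<Rightarrow> real"
  assumes n2: "CARD('n) \<ge> 2"
    and nontriv: "\<exists>v::'a::real_normed_vector. v \<noteq> 0"
  shows "(absolute_normalized_norm (psi_norm \<psi> :: 'a ^ 'n \<Rightarrow> real) \<longrightarrow> Psi \<psi>) \<and>
         (absolute_normalized_sc_norm (psi_norm \<psi> :: 'a ^ 'n \<Rightarrow> real) \<longrightarrow>
            Psi_sc \<psi> \<and> strictly_convex_norm (norm :: 'a \<Rightarrow> real))"
proof -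
  obtain v :: 'a where "v \<noteq> 0" using nontriv by blast
  then have u: "norm (sgn v) = 1" by (simp add: norm_sgn)
  have "Psi \<psi>" if "absolute_normalized_norm (psi_norm \<psi> :: 'a ^ 'n \<Rightarrow> real)"
    using Psi_if_absolute_normalized_psi_norm[OF u that] .
  moreover have "Psi_sc \<psi>" if "absolute_normalized_sc_norm (psi_norm \<psi> :: 'a ^ 'n \<Rightarrow> real)"
    using that Psi_if_absolute_normalized_psi_norm[OF u] strictly_convex_on_Omega_if_sc_psi_norm[OF u]
    unfolding absolute_normalized_sc_norm_def Psi_sc_def by blast
  ultimately show ?thesis using strictly_convex_norm_if_absolute_normalized_sc by blast
qed

end
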